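(* Let $\nu\in\mathbb{C}$ with $-\nu\notin\{0,1,2,\dots\}$. Then for each integer $m$ and $-\pi<\arg\zeta<\pi$, $$S_{\nu-1,\nu}(\zeta\mathrm{e}^{-m\pi i})=\mathrm{e}^{-m\nu\pi i}S_{\nu-1,\nu}(\zeta)+K'_+H^{(1)}_\nu(\zeta)+K'_-H^{(2)}_\nu(\zeta),$$ where $K'_\pm=\pi2^{\nu-2}i\,\mathrm{e}^{-m\nu\pi i}\Gamma(\nu)\big[U_{m-1}(\cos\nu\pi)\mathrm{e}^{(m\pm1)\nu\pi i}-m\big]$.
   Context: $J_\nu,Y_\nu$ are Bessel functions of the first and second kinds, $H^{(1)}_\nu=J_\nu+iY_\nu$, $H^{(2)}_\nu=J_\nu-iY_\nu$, $\psi=\Gamma'/\Gamma$. For every integer $k$, $U_{k-1}(\cos\theta)=\frac{\sin k\theta}{\sin\theta}$ (limit when $\sin\theta=0$). For $-\nu\notin\{0,1,2,\dots\}$ the Lommel function $S_{\nu-1,\nu}$ is defined by $S_{\nu-1,\nu}(\zeta)=\Gamma(\nu)\big[2^{\nu-1}J_\nu(\zeta)\log\zeta-2^{\nu-2}\pi Y_\nu(\zeta)-\frac{\zeta^\nu}{4}\sum_{k\ge0}\frac{(-1)^k(\zeta/2)^{2k}A(k)}{k!\Gamma(\nu+k+1)}\big]$, $A(k)=2\log2+\psi(\nu+k+1)+\psi(k+1)$. Right-hand side functions are on the principal branch $-\pi<\arg\zeta<\pi$; $g(\zeta\mathrm{e}^{-m\pi i})$ is the value of the analytic continuation of the principal branch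 at the point over $\zeta$ with argument $\arg\zeta-m\pi$. *)

theory Defs
  imports "HOL-Complex_Analysis.Complex_Analysis"
begin

text \<open>Bessel function of the first kind, principal branch (powr uses the principal Ln).\<close>
definition besselJ :: "complex \<Rightarrow> complex \<Rightarrow> complex" where
  "besselJ \<nu> z = (z / 2) powr \<nu> *
     (\<Sum>k. (-1) ^ k * (z / 2) ^ (2 * k) * rGamma (\<nu> + of_nat k + 1) / fact k)"

definition besselY_aux :: "complex \<Rightarrow> complex \<Rightarrow> complex" where
  "besselY_aux \<mu> z = (besselJ \<mu> z * cos (\<mu> * pi) - besselJ (- \<mu>) z) / sin (\<mu> * pi)"

definition besselY :: "complex \<Rightarrow> complex \<Rightarrow> complex" where
  "besselY \<nu> z = (if \<nu> \<notin> \<int> then besselY_aux \<nu> z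
                   else Lim (at \<nu>) (\<lambda>\<mu>. besselY_aux \<mu> z))"

definition hankel1 :: "complex \<Rightarrow> complex \<Rightarrow> complex" where
  "hankel1 \<nu> z = besselJ \<nu> z + \<i> * besselY \<nu> z"

definition hankel2 :: "complex \<Rightarrow> complex \<Rightarrow> complex" where
  "hankel2 \<nu> z = besselJ \<nu> z - \<i> * besselY \<nu> z"

text \<open>\<open>chebU_cos k \<theta>\<close> is \<open>U_{k-1}(cos \<theta>) = sin(k \<theta>)/sin \<theta>\<close> (limit when \<open>sin \<theta> = 0\<close>).\<close>
definition chebU_cos :: "int \<Rightarrow> complex \<Rightarrow> complex" where
  "chebU_cos k \<theta> = (if sin \<theta> \<noteq> 0 then sin (of_int k * \<theta>) / sin \<theta>
                     else Lim (at \<theta>) (\<lambda>t. sin (of_int k * t) / sin t))"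

definition lommelA :: "complex \<Rightarrow> nat \<Rightarrow> complex" where
  "lommelA \<nu> k = 2 * Ln 2 + Digamma (\<nu> + of_nat k + 1) + Digamma (of_nat k + 1)"

text \<open>Lommel function \<open>S_{\<nu>-1,\<nu>}\<close>, principal branch.\<close>
definition lommelS :: "complex \<Rightarrow> complex \<Rightarrow> complex" where
  "lommelS \<nu> z = Gamma \<nu> *
     (2 powr (\<nu> - 1) * besselJ \<nu> z * Ln z
      - 2 powr (\<nu> - 2) * pi * besselY \<nu> z
      - z powr \<nu> / 4 *
        (\<Sum>k. (-1) ^ k * (z / 2) ^ (2 * k) * lommelA \<nu> k / (fact k * Gamma (\<nu> + of_nat k + 1))))"

end

theory Submission
  imports Defs
begin

text \<open>In the variable \<open>w = log \<zeta>\<close> every ingredient of \<open>S_{\<nu>-1,\<nu>}\<close> becomes entire: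
  \<open>J_\<mu>(e^w) = e^{\<mu>(w - log 2)} E_\<mu>(e^w)\<close> with \<open>E_\<mu>\<close> an even entire power series, so
  \<open>w \<mapsto> w - m\<pi>i\<close> multiplies \<open>J_{\<plusminus>\<nu>}\<close> by \<open>e^{\<mp>m\<nu>\<pi>i}\<close>. Consequently
  \<open>Y_\<nu> = (J_\<nu> cos \<nu>\<pi> - J_{-\<nu>}) / sin \<nu>\<pi>\<close> picks up the extra term
  \<open>-2i U_{m-1}(cos \<nu>\<pi>) cos \<nu>\<pi> J_\<nu>\<close>, and this survives the limit to integer orders.
  The logarithm in \<open>S_{\<nu>-1,\<nu>}\<close> contributes \<open>-m\<pi>i J_\<nu>\<close>, the remaining even series is unchanged,
  and rewriting \<open>J_\<nu>, Y_\<nu>\<close> through \<open>H^{(1)}_\<nu>, H^{(2)}_\<nu>\<close> gives the formula. The hypothesis on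
  \<open>\<nu>\<close> is needed only to make the series with coefficients \<open>A(k)/\<Gamma>(\<nu>+k+1)\<close> entire.\<close>

section \<open>Reciprocal Gamma function on shifted sets\<close>

lemma rGamma_bounded_on_shifts:
  assumes "compact (K :: complex set)"
  obtains B where "B \<ge> 0" "\<And>u k. u \<in> K \<Longrightarrow> norm (rGamma (u + of_nat k)) \<le> B"
proof -
  obtain R where R: "\<And>u. u \<in> K \<Longrightarrow> norm u \<le> R"
    using compact_imp_bounded[OF assms] bounded_iff by blast
  define N where "N = nat \<lceil>R\<rceil> + 1"
  define K' where "K' = (\<Union>k\<le>N. (+) (of_nat k) ` K)"
  have "compact K'" unfolding K'_def
    by (rule compact_UN) (auto intro: compact_translation assms)
  then have "compact (rGamma ` K')"
    by (rule compact_continuous_image[rotated]) (rule continuous_on_rGamma)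
  then obtain B where B: "B > 0" "\<And>u. u \<in> K' \<Longrightarrow> norm (rGamma u) \<le> B"
    using compact_imp_bounded bounded_pos by (metis image_eqI)
  have bound: "norm (rGamma (u + of_nat k)) \<le> B" if u: "u \<in> K" for u k
  proof (induction k)
    case 0
    have "u + of_nat 0 \<in> K'" unfolding K'_def using u by force
    then show ?case using B(2) by blast
  next
    case (Suc j)
    show ?case
    proof (cases "Suc j \<le> N")
      case True
      then have "u + of_nat (Suc j) \<in> K'"
        unfolding K'_def using u by (force simp: add.commute)
      then show ?thesis using B(2) by blast
    next
      case False
      \<comment> \<open>far from the poles, \<open>rGamma (z + 1) = rGamma z / z\<close> with \<open>\<bar>z\<bar> \<ge> 1\<close> only decreases\<close>
      have "real j \<ge> R + 1" using False unfolding N_def by linarith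
      moreover have "norm (of_nat j :: complex) \<le> norm (u + of_nat j) + norm u"
        using norm_triangle_ineq4[of "u + of_nat j" u] by simp
      ultimately have "norm (u + of_nat j) \<ge> 1" using R[OF u] by simp
      then have "norm (rGamma (u + of_nat (Suc j))) \<le> norm ((u + of_nat j) * rGamma (u + of_nat j + 1))"
        by (simp add: norm_mult mult_le_cancel_right1 add_ac)
      also have "\<dots> = norm (rGamma (u + of_nat j))" by (simp only: rGamma_plus1)
      finally show ?thesis using Suc.IH by linarith
    qed
  qed
  show thesis by (rule that[OF less_imp_le[OF B(1)] bound])
qed

lemma deriv_rGamma_bounded_on_shifts:
  fixes z :: complex
  obtains B where "B \<ge> 0" "\<And>k. norm (deriv rGamma (z + of_nat k)) \<le> B"
proof -
  obtain B where B: "B \<ge> 0" "\<And>u k. u \<in> cball z 1 \<Longrightarrow> norm (rGamma (u + of_nat k)) \<le> B"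
    using rGamma_bounded_on_shifts[OF compact_cball] by blast
  have "norm (deriv rGamma (z + of_nat k)) \<le> B" for k
  proof -
    have "norm ((deriv ^^ 1) rGamma (z + of_nat k)) \<le> fact 1 * B / 1 ^ 1"
    proof (rule Cauchy_inequality)
      fix x assume "norm (z + of_nat k - x) = 1"
      then have "x - of_nat k \<in> cball z 1" by (simp add: dist_norm algebra_simps)
      from B(2)[OF this, of k] show "norm (rGamma x) \<le> B" by simp
    qed (rule holomorphic_rGamma continuous_on_rGamma zero_less_one)+
    then show ?thesis by simp
  qed
  with B(1) show thesis by (rule that)
qed

section \<open>Even power series\<close>

lemma has_field_derivative_suminf_dominated:
  fixes f f' :: "nat \<Rightarrow> complex \<Rightarrow> complex"
  assumes "\<And>n x. (f n has_field_derivative f' n x) (at x)"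
    and dom: "\<And>x. \<exists>d h. 0 < d \<and> summable h \<and> (\<forall>n. \<forall>y\<in>ball x d. norm (f n y) \<le> h n)"
  shows "((\<lambda>x. \<Sum>n. f n x) has_field_derivative (\<Sum>n. f' n x)) (at x)"
    and "summable (\<lambda>n. f n x)"
proof -
  have "\<exists>d h. 0 < d \<and> summable h \<and> (\<forall>\<^sub>F n in sequentially. \<forall>y\<in>ball x d \<inter> UNIV. norm (f n y) \<le> h n)"
    for x
  proof -
    obtain d h where "0 < d" "summable h" "\<forall>n. \<forall>y\<in>ball x d. norm (f n y) \<le> h n"
      using dom[of x] by blast
    then show ?thesis by (intro exI[of _ d] exI[of _ h]) (simp add: always_eventually)
  qed
  then have "\<exists>g g'. \<forall>x\<in>UNIV. ((\<lambda>n. f n x) sums g x) \<and> ((\<lambda>n. f' n x) sums g' x)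
                               \<and> (g has_field_derivative g' x) (at x)"
    by (rule series_and_derivative_comparison_local[OF open_UNIV assms(1)])
  then obtain g g' where gg: "\<And>x. ((\<lambda>n. f n x) sums g x) \<and> ((\<lambda>n. f' n x) sums g' x)
                               \<and> (g has_field_derivative g' x) (at x)"
    by blast
  then have "(\<lambda>x. \<Sum>n. f n x) = g" "(\<Sum>n. f' n x) = g' x"
    by (auto simp: sums_iff)
  with gg show "((\<lambda>x. \<Sum>n. f n x) has_field_derivative (\<Sum>n. f' n x)) (at x)"
    and "summable (\<lambda>n. f n x)" by (auto simp: sums_iff)
qed

definition even_series :: "(nat \<Rightarrow> complex) \<Rightarrow> complex \<Rightarrow> complex" where
  "even_series c z = (\<Sum>k. c k * (z / 2) ^ (2 * k))"

lemma
  fixes c :: "nat \<Rightarrow> complex"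
  assumes C: "C \<ge> 0" and bound: "\<And>n. norm (c n) \<le> B * C ^ n / fact n"
  shows holomorphic_even_series: "even_series c holomorphic_on UNIV"
    and summable_even_series: "summable (\<lambda>n. c n * (z / 2) ^ (2 * n))"
proof -
  define f where "f = (\<lambda>n (z::complex). c n * (z / 2) ^ (2 * n))"
  have deriv: "(f n has_field_derivative deriv (f n) x) (at x)" for n x
    unfolding f_def by (rule DERIV_deriv_iff_field_differentiable[THEN iffD2]) (auto intro!: derivative_intros)
  have "B \<ge> 0" using bound[of 0] by (simp add: order_trans[OF norm_ge_zero])
  have dominated: "\<exists>d h. 0 < d \<and> summable h \<and> (\<forall>n. \<forall>y\<in>ball x d. norm (f n y) \<le> h n)" for x
  proof -
    define a where "a = C * ((norm x + 1) ^ 2 / 4)"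
    define h where "h = (\<lambda>n. B * (inverse (fact n) * a ^ n))"
    have "norm (f n y) \<le> h n" if y: "y \<in> ball x 1" for n y
    proof -
      have "norm y \<le> norm x + 1"
        using y norm_triangle_ineq2[of y x] by (simp add: dist_norm norm_minus_commute)
      then have "(norm y / 2) ^ (2 * n) \<le> ((norm x + 1) / 2) ^ (2 * n)"
        by (intro power_mono) auto
      then have "norm (c n) * (norm y / 2) ^ (2 * n) \<le> (B * C ^ n / fact n) * ((norm x + 1) / 2) ^ (2 * n)"
        using \<open>B \<ge> 0\<close> C by (intro mult_mono bound) auto
      moreover have "norm (f n y) = norm (c n) * (norm y / 2) ^ (2 * n)"
        by (simp add: f_def norm_mult norm_power norm_divide)
      moreover have "((norm x + 1) / 2) ^ (2 * n) = ((norm x + 1) ^ 2 / 4) ^ n"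
        by (simp add: power_mult power_divide)
      ultimately show ?thesis
        unfolding h_def a_def power_mult_distrib divide_inverse by (simp only: mult_ac)
    qed
    moreover have "summable h" unfolding h_def by (intro summable_mult summable_exp)
    ultimately show ?thesis by (intro exI[of _ 1] exI[of _ h]) auto
  qed
  show "even_series c holomorphic_on UNIV"
    using has_field_derivative_suminf_dominated(1)[OF deriv dominated]
    unfolding holomorphic_on_def field_differentiable_def even_series_def f_def
    by (blast intro: has_field_derivative_at_within)
  show "summable (\<lambda>n. c n * (z / 2) ^ (2 * n))"
    using has_field_derivative_suminf_dominated(2)[OF deriv dominated] unfolding f_def .
qed

lemma even_series_mult_sign:
  assumes "s ^ 2 = 1"
  shows "even_series c (z * s) = even_series c z"
proof -
  have "(z * s / 2) ^ (2 * k) = (z / 2) ^ (2 * k)" for k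
    using assms by (simp add: power_mult power_mult_distrib power_divide)
  then show ?thesis unfolding even_series_def by simp
qed

lemma even_series_exp_shift:
  "even_series c (exp (w - of_int m * pi * \<i>)) = even_series c (exp w)"
proof -
  have "exp (- (of_int m * pi * \<i>)) ^ 2 = exp ((2 * of_int (- m) * pi) * \<i>)"
    by (simp flip: exp_of_nat_mult add: algebra_simps)
  also have "\<dots> = 1" by (rule exp_integer_2pi) simp
  finally show ?thesis
    by (simp add: exp_diff exp_minus divide_inverse even_series_mult_sign)
qed

definition besselJ_coeff :: "complex \<Rightarrow> nat \<Rightarrow> complex" where
  "besselJ_coeff \<mu> k = (-1) ^ k * rGamma (\<mu> + of_nat k + 1) / fact k"

definition besselJ_coeff_deriv :: "complex \<Rightarrow> nat \<Rightarrow> complex" where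
  "besselJ_coeff_deriv \<mu> k = (-1) ^ k * deriv rGamma (\<mu> + of_nat k + 1) / fact k"

definition lommelS_coeff :: "complex \<Rightarrow> nat \<Rightarrow> complex" where
  "lommelS_coeff \<nu> k = (-1) ^ k * lommelA \<nu> k / (fact k * Gamma (\<nu> + of_nat k + 1))"

lemma
  fixes \<mu> :: complex
  shows holomorphic_even_series_besselJ_coeff: "even_series (besselJ_coeff \<mu>) holomorphic_on UNIV"
    and summable_even_series_besselJ_coeff: "summable (\<lambda>n. besselJ_coeff \<mu> n * (z / 2) ^ (2 * n))"
proof -
  obtain B where "B \<ge> 0" "\<And>u k. u \<in> {\<mu> + 1} \<Longrightarrow> norm (rGamma (u + of_nat k)) \<le> B"
    by (rule rGamma_bounded_on_shifts[OF compact_sing[of "\<mu> + 1"]]) blast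
  then have "norm (rGamma (\<mu> + of_nat k + 1)) \<le> B" for k by (simp add: add_ac)
  then have "norm (besselJ_coeff \<mu> k) \<le> B * 1 ^ k / fact k" for k
    using \<open>B \<ge> 0\<close> by (simp add: besselJ_coeff_def norm_mult norm_divide norm_power divide_right_mono)
  then show "even_series (besselJ_coeff \<mu>) holomorphic_on UNIV"
    and "summable (\<lambda>n. besselJ_coeff \<mu> n * (z / 2) ^ (2 * n))"
    by (rule holomorphic_even_series[OF zero_le_one], rule summable_even_series[OF zero_le_one])
qed

lemma holomorphic_even_series_besselJ_coeff_deriv:
  "even_series (besselJ_coeff_deriv \<mu>) holomorphic_on UNIV"
proof -
  obtain B where "B \<ge> 0" "\<And>k. norm (deriv rGamma (\<mu> + 1 + of_nat k)) \<le> B"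
    using deriv_rGamma_bounded_on_shifts[of "\<mu> + 1"] by blast
  then have "norm (deriv rGamma (\<mu> + of_nat k + 1)) \<le> B" for k by (simp add: add_ac)
  then have "norm (besselJ_coeff_deriv \<mu> k) \<le> B * 1 ^ k / fact k" for k
    using \<open>B \<ge> 0\<close> by (simp add: besselJ_coeff_deriv_def norm_mult norm_divide norm_power divide_right_mono)
  then show ?thesis by (rule holomorphic_even_series[OF zero_le_one])
qed

lemma Digamma_div_Gamma:
  assumes "z \<notin> \<int>\<^sub>\<le>\<^sub>0"
  shows "Digamma z / Gamma z = - deriv rGamma z"
  using DERIV_imp_deriv[OF has_field_derivative_rGamma_no_nonpos_int[OF assms]]
  by (simp add: rGamma_inverse_Gamma divide_inverse mult.commute)

lemma norm_Digamma_of_nat_plus_1: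
  "norm (Digamma (of_nat k + 1 :: complex)) \<le> norm (Digamma (1 :: complex)) + real k"
proof (induction k)
  case (Suc k)
  have "norm (of_nat k + 1 :: complex) = real k + 1"
    by (metis norm_of_nat of_nat_Suc add.commute)
  moreover have "(of_nat k + 1 :: complex) \<noteq> 0"
    by (metis of_nat_Suc of_nat_eq_0_iff nat.distinct(1) add.commute)
  then have "Digamma (of_nat k + 1 + 1 :: complex) = Digamma (of_nat k + 1) + 1 / (of_nat k + 1)"
    by (rule Digamma_plus1)
  moreover have "(of_nat (Suc k) + 1 :: complex) = of_nat k + 1 + 1" by simp
  moreover have "norm (1 / (of_nat k + 1 :: complex)) \<le> 1"
    using \<open>norm (of_nat k + 1 :: complex) = real k + 1\<close> by (simp add: norm_divide)
  ultimately have "norm (Digamma (of_nat (Suc k) + 1 :: complex)) \<le> norm (Digamma (of_nat k + 1 :: complex)) + 1"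
    using norm_triangle_ineq[of "Digamma (of_nat k + 1 :: complex)" "1 / (of_nat k + 1)"] by simp
  with Suc.IH show ?case by simp
qed simp

lemma lommelA_div_Gamma:
  assumes "\<nu> + 1 + of_nat k \<notin> \<int>\<^sub>\<le>\<^sub>0"
  shows "lommelA \<nu> k / Gamma (\<nu> + 1 + of_nat k)
           = (2 * Ln 2 + Digamma (of_nat k + 1)) * rGamma (\<nu> + 1 + of_nat k) - deriv rGamma (\<nu> + 1 + of_nat k)"
proof -
  let ?z = "\<nu> + 1 + of_nat k"
  have "Gamma ?z \<noteq> 0" using assms by (rule Gamma_nonzero)
  then have "lommelA \<nu> k / Gamma ?z = (2 * Ln 2 + Digamma (of_nat k + 1)) * rGamma ?z + Digamma ?z / Gamma ?z"
    by (simp add: lommelA_def rGamma_inverse_Gamma field_simps add_ac)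
  also have "\<dots> = (2 * Ln 2 + Digamma (of_nat k + 1)) * rGamma ?z - deriv rGamma ?z"
    using Digamma_div_Gamma[OF assms] by simp
  finally show ?thesis .
qed

lemma lommelS_coeff_bound:
  assumes "\<And>n::nat. \<nu> \<noteq> - of_nat n"
  obtains M where "\<And>k. norm (lommelS_coeff \<nu> k) \<le> M * 2 ^ k / fact k"
proof -
  obtain B1 where B1: "B1 \<ge> 0" "\<And>k. norm (rGamma (\<nu> + 1 + of_nat k)) \<le> B1"
    using rGamma_bounded_on_shifts[OF compact_sing] by (metis singletonI)
  obtain B2 where B2: "B2 \<ge> 0" "\<And>k. norm (deriv rGamma (\<nu> + 1 + of_nat k)) \<le> B2"
    using deriv_rGamma_bounded_on_shifts by blast
  define a where "a = 2 * norm (Ln 2 :: complex) + norm (Digamma (1 :: complex))"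
  have "a \<ge> 0" unfolding a_def by simp
  have "norm (lommelS_coeff \<nu> k) \<le> ((a + 1) * B1 + B2) * 2 ^ k / fact k" for k
  proof -
    let ?z = "\<nu> + 1 + of_nat k"
    have "?z \<notin> \<int>\<^sub>\<le>\<^sub>0"
    proof
      assume "?z \<in> \<int>\<^sub>\<le>\<^sub>0"
      then obtain n where n: "?z = - of_nat n" by (elim nonpos_Ints_cases')
      have "\<nu> = - of_nat n - of_nat k - 1" by (simp add: n[symmetric])
      then have "\<nu> = - of_nat (n + k + 1)" by simp
      with assms show False by blast
    qed
    have "norm (2 * Ln 2 + Digamma (of_nat k + 1 :: complex)) \<le> a + real k"
      using norm_triangle_ineq[of "2 * Ln 2 :: complex" "Digamma (of_nat k + 1)"] norm_Digamma_of_nat_plus_1[of k]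
      unfolding a_def by (simp add: norm_mult)
    then have "norm ((2 * Ln 2 + Digamma (of_nat k + 1)) * rGamma ?z) \<le> (a + real k) * B1"
      unfolding norm_mult using B1 \<open>a \<ge> 0\<close> by (intro mult_mono) auto
    then have "norm (lommelA \<nu> k / Gamma ?z) \<le> (a + real k) * B1 + B2"
      unfolding lommelA_div_Gamma[OF \<open>?z \<notin> \<int>\<^sub>\<le>\<^sub>0\<close>]
      using norm_triangle_ineq4[of "(2 * Ln 2 + Digamma (of_nat k + 1)) * rGamma ?z" "deriv rGamma ?z"] B2(2)[of k]
      by linarith
    also have "\<dots> \<le> ((a + 1) * B1 + B2) * 2 ^ k"
    proof -
      have "k + 1 \<le> 2 ^ k" using less_exp[of k] by (simp add: Suc_le_eq)
      then have "real (k + 1) \<le> real (2 ^ k)" by (simp only: of_nat_le_iff)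
      then have "real k + 1 \<le> 2 ^ k" by simp
      moreover have "a \<le> a * 2 ^ k" "B2 \<le> B2 * 2 ^ k"
        using mult_left_mono[of 1 "2 ^ k" a] mult_left_mono[of 1 "2 ^ k" B2] \<open>a \<ge> 0\<close> B2(1) by simp_all
      ultimately have "a + real k \<le> (a + 1) * 2 ^ k" by (simp add: distrib_right)
      from mult_right_mono[OF this B1(1)] show ?thesis
        using \<open>B2 \<le> B2 * 2 ^ k\<close> by (simp add: algebra_simps)
    qed
    finally have "norm (lommelA \<nu> k / Gamma ?z) / fact k \<le> ((a + 1) * B1 + B2) * 2 ^ k / fact k"
      by (simp add: divide_right_mono)
    moreover have "lommelS_coeff \<nu> k = (-1) ^ k * (lommelA \<nu> k / Gamma ?z) / fact k"
      by (simp add: lommelS_coeff_def add_ac)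
    ultimately show ?thesis by (simp add: norm_mult norm_divide norm_power)
  qed
  then show thesis by (rule that)
qed

lemma holomorphic_even_series_lommelS_coeff:
  assumes "\<And>n::nat. \<nu> \<noteq> - of_nat n"
  shows "even_series (lommelS_coeff \<nu>) holomorphic_on UNIV"
proof -
  obtain M where "\<And>k. norm (lommelS_coeff \<nu> k) \<le> M * 2 ^ k / fact k"
    using lommelS_coeff_bound[OF assms] by blast
  then show ?thesis by (rule holomorphic_even_series[rotated]) simp
qed

lemma has_field_derivative_even_series_besselJ_coeff:
  "((\<lambda>\<mu>. even_series (besselJ_coeff \<mu>) z) has_field_derivative even_series (besselJ_coeff_deriv \<mu>) z) (at \<mu>)"
proof -
  define f where "f = (\<lambda>k \<mu>. besselJ_coeff \<mu> k * (z / 2) ^ (2 * k))"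
  define f' where "f' = (\<lambda>k \<mu>. besselJ_coeff_deriv \<mu> k * (z / 2) ^ (2 * k))"
  have deriv: "(f k has_field_derivative f' k \<mu>) (at \<mu>)" for k \<mu>
  proof -
    define c where "c = (-1) ^ k / fact k * (z / 2) ^ (2 * k)"
    have "f k = (\<lambda>\<mu>. rGamma (\<mu> + (of_nat k + 1)) * c)"
      by (rule ext) (simp add: f_def c_def besselJ_coeff_def add.assoc)
    moreover have "f' k \<mu> = deriv rGamma (\<mu> + (of_nat k + 1)) * c"
      by (simp add: f'_def c_def besselJ_coeff_deriv_def add.assoc)
    moreover have "(rGamma has_field_derivative deriv rGamma (\<mu> + (of_nat k + 1))) (at (\<mu> + (of_nat k + 1)))"
      using field_differentiable_rGamma by (rule DERIV_deriv_iff_field_differentiable[THEN iffD2])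
    then have "((\<lambda>\<mu>. rGamma (\<mu> + (of_nat k + 1))) has_field_derivative deriv rGamma (\<mu> + (of_nat k + 1))) (at \<mu>)"
      by (rule DERIV_shift[THEN iffD1])
    ultimately show ?thesis by (simp only: DERIV_cmult_right)
  qed
  have dominated: "\<exists>d h. 0 < d \<and> summable h \<and> (\<forall>n. \<forall>y\<in>ball x d. norm (f n y) \<le> h n)" for x
  proof -
    obtain B where B: "B \<ge> 0" "\<And>u k. u \<in> cball (x + 1) 1 \<Longrightarrow> norm (rGamma (u + of_nat k)) \<le> B"
      using rGamma_bounded_on_shifts[OF compact_cball] by blast
    define h where "h = (\<lambda>k. B * (inverse (fact k) * ((norm z / 2) ^ 2) ^ k))"
    have "norm (f k y) \<le> h k" if "y \<in> ball x 1" for k y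
    proof -
      have "y + 1 \<in> cball (x + 1) 1" using that by (simp add: dist_norm)
      from B(2)[OF this, of k] have r: "norm (rGamma (y + of_nat k + 1)) \<le> B" by (simp add: add_ac)
      have "norm (besselJ_coeff y k) = norm (rGamma (y + of_nat k + 1)) / fact k"
        by (simp add: besselJ_coeff_def norm_mult norm_divide norm_power)
      moreover have "norm ((z / 2) ^ (2 * k)) = (norm z / 2) ^ (2 * k)"
        by (simp add: norm_power norm_divide)
      ultimately have "norm (f k y) = norm (rGamma (y + of_nat k + 1)) * (inverse (fact k) * ((norm z / 2) ^ 2) ^ k)"
        unfolding f_def norm_mult by (simp only: divide_inverse mult.assoc power_mult)
      also have "\<dots> \<le> h k" unfolding h_def by (rule mult_right_mono[OF r]) simp
      finally show ?thesis .
    qed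
    moreover have "summable h" unfolding h_def by (intro summable_mult summable_exp)
    ultimately show ?thesis by (intro exI[of _ 1] exI[of _ h]) auto
  qed
  show ?thesis
    using has_field_derivative_suminf_dominated(1)[OF deriv dominated]
    unfolding f_def f'_def even_series_def .
qed

lemma even_series_besselJ_coeff_minus_of_nat:
  "even_series (besselJ_coeff (- of_nat n)) z = (-1) ^ n * (z / 2) ^ (2 * n) * even_series (besselJ_coeff (of_nat n)) z"
proof -
  define g where "g = (\<lambda>k. besselJ_coeff (- of_nat n) k * (z / 2) ^ (2 * k))"
  \<comment> \<open>the first \<open>n\<close> terms vanish at the poles of \<open>Gamma\<close>; the rest is the series of order \<open>n\<close>\<close>
  have "(\<Sum>k<n. g k) = 0"
  proof (intro sum.neutral ballI)
    fix k assume "k \<in> {..<n}"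
    then have "- of_nat n + of_nat k + 1 = (- of_nat (n - k - 1) :: complex)"
      by (simp add: of_nat_diff)
    then show "g k = 0" unfolding g_def besselJ_coeff_def by simp
  qed
  moreover have "g (j + n) = (-1) ^ n * (z / 2) ^ (2 * n) * (besselJ_coeff (of_nat n) j * (z / 2) ^ (2 * j))" for j
  proof -
    have fact: "rGamma (of_nat i + 1 :: complex) = inverse (fact i)" for i
      using Gamma_fact[of i] by (simp add: rGamma_inverse_Gamma add.commute)
    have shift: "- of_nat n + of_nat (j + n) + 1 = (of_nat j + 1 :: complex)"
      "(of_nat n + of_nat j + 1 :: complex) = of_nat (n + j) + 1" by simp_all
    show ?thesis
      unfolding g_def besselJ_coeff_def shift fact distrib_left power_add
      by (simp only: divide_inverse add.commute[of j n] mult_ac)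
  qed
  then have "(\<lambda>j. g (j + n)) sums ((-1) ^ n * (z / 2) ^ (2 * n) * even_series (besselJ_coeff (of_nat n)) z)"
    using sums_mult[OF summable_sums[OF summable_even_series_besselJ_coeff]]
    unfolding even_series_def by simp
  ultimately have "g sums ((-1) ^ n * (z / 2) ^ (2 * n) * even_series (besselJ_coeff (of_nat n)) z)"
    using sums_iff_shift[of g n] by simp
  then show ?thesis unfolding even_series_def g_def by (simp add: sums_iff)
qed

section \<open>Functions of the logarithmic variable\<close>

text \<open>On the strip \<open>\<bar>Im w\<bar> < pi\<close> these functions of \<open>w = log \<zeta>\<close> agree with the principal
  branches at \<open>exp w\<close>, but they are entire in \<open>w\<close> and hence give the continuation to every
  argument of \<open>\<zeta>\<close>.\<close>

definition besselJ_log :: "complex \<Rightarrow> complex \<Rightarrow> complex" where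
  "besselJ_log \<mu> w = exp (\<mu> * (w - Ln 2)) * even_series (besselJ_coeff \<mu>) (exp w)"

definition besselY_quot :: "complex \<Rightarrow> complex \<Rightarrow> complex" where
  "besselY_quot \<mu> w = (besselJ_log \<mu> w * cos (\<mu> * pi) - besselJ_log (- \<mu>) w) / sin (\<mu> * pi)"

definition besselY_log :: "complex \<Rightarrow> complex \<Rightarrow> complex" where
  "besselY_log \<nu> w = (if \<nu> \<notin> \<int> then besselY_quot \<nu> w else Lim (at \<nu>) (\<lambda>\<mu>. besselY_quot \<mu> w))"

definition lommelS_log :: "complex \<Rightarrow> complex \<Rightarrow> complex" where
  "lommelS_log \<nu> w = Gamma \<nu> * (2 powr (\<nu> - 1) * besselJ_log \<nu> w * w - 2 powr (\<nu> - 2) * pi * besselY_log \<nu> w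
      - exp (\<nu> * w) / 4 * even_series (lommelS_coeff \<nu>) (exp w))"

lemma besselJ_eq_even_series: "besselJ \<mu> z = (z / 2) powr \<mu> * even_series (besselJ_coeff \<mu>) z"
proof -
  have "(-1) ^ k * (z / 2) ^ (2 * k) * rGamma (\<mu> + of_nat k + 1) / fact k = besselJ_coeff \<mu> k * (z / 2) ^ (2 * k)" for k
    unfolding besselJ_coeff_def by (simp only: divide_inverse mult_ac)
  then show ?thesis unfolding besselJ_def even_series_def by simp
qed

lemma Ln_exp_div_2:
  assumes "- pi < Im w" "Im w < pi"
  shows "Ln (exp w / 2) = w - Ln 2"
proof -
  have "exp w / 2 = exp (w - Ln 2)" by (simp add: exp_diff)
  moreover have "Im (w - Ln 2) = Im w" using Ln_of_real[of 2] by simp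
  ultimately show ?thesis using assms by simp
qed

lemma besselJ_exp_eq:
  assumes "- pi < Im w" "Im w < pi"
  shows "besselJ \<mu> (exp w) = besselJ_log \<mu> w"
proof -
  have "(exp w / 2) powr \<mu> = exp (\<mu> * (w - Ln 2))"
    unfolding powr_def using Ln_exp_div_2[OF assms] by simp
  then show ?thesis unfolding besselJ_eq_even_series besselJ_log_def by simp
qed

lemma besselY_exp_eq:
  assumes "- pi < Im w" "Im w < pi"
  shows "besselY \<nu> (exp w) = besselY_log \<nu> w"
proof -
  have "besselY_aux \<mu> (exp w) = besselY_quot \<mu> w" for \<mu>
    unfolding besselY_aux_def besselY_quot_def besselJ_exp_eq[OF assms] ..
  then show ?thesis unfolding besselY_def besselY_log_def by simp
qed

lemma lommelS_exp_eq:
  assumes "- pi < Im w" "Im w < pi"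
  shows "lommelS \<nu> (exp w) = lommelS_log \<nu> w"
proof -
  have "(-1) ^ k * (z / 2) ^ (2 * k) * lommelA \<nu> k / (fact k * Gamma (\<nu> + of_nat k + 1))
        = lommelS_coeff \<nu> k * (z / 2) ^ (2 * k)" for k z
    unfolding lommelS_coeff_def by (simp only: divide_inverse mult_ac)
  then have "(\<Sum>k. (-1) ^ k * (z / 2) ^ (2 * k) * lommelA \<nu> k / (fact k * Gamma (\<nu> + of_nat k + 1)))
             = even_series (lommelS_coeff \<nu>) z" for z
    unfolding even_series_def by simp
  moreover have "exp w powr \<nu> = exp (\<nu> * w)"
    unfolding powr_def using assms by simp
  ultimately show ?thesis
    using assms unfolding lommelS_def lommelS_log_def besselJ_exp_eq[OF assms] besselY_exp_eq[OF assms]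
    by simp
qed

lemma besselJ_log_shift:
  fixes \<mu> :: complex
  shows "besselJ_log \<mu> (w - of_int m * pi * \<i>) = exp (- of_int m * \<mu> * pi * \<i>) * besselJ_log \<mu> w"
proof -
  have "exp (\<mu> * (w - of_int m * pi * \<i> - Ln 2)) = exp (- of_int m * \<mu> * pi * \<i>) * exp (\<mu> * (w - Ln 2))"
    by (simp flip: exp_add add: algebra_simps)
  then show ?thesis unfolding besselJ_log_def even_series_exp_shift by simp
qed

lemma holomorphic_on_compose_exp: "f holomorphic_on UNIV \<Longrightarrow> (\<lambda>w. f (exp w)) holomorphic_on UNIV"
  using holomorphic_on_compose[of exp UNIV f] holomorphic_on_subset[of f UNIV "range exp"]
  by (simp add: o_def holomorphic_on_exp)

lemma holomorphic_besselJ_log: "besselJ_log \<mu> holomorphic_on UNIV"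
  using holomorphic_on_compose_exp[OF holomorphic_even_series_besselJ_coeff]
  unfolding besselJ_log_def[abs_def] by (intro holomorphic_intros)

definition besselJ_log_deriv_order :: "complex \<Rightarrow> complex \<Rightarrow> complex" where
  "besselJ_log_deriv_order \<mu> w = (w - Ln 2) * besselJ_log \<mu> w
     + exp (\<mu> * (w - Ln 2)) * even_series (besselJ_coeff_deriv \<mu>) (exp w)"

lemma holomorphic_besselJ_log_deriv_order: "besselJ_log_deriv_order \<mu> holomorphic_on UNIV"
  using holomorphic_on_compose_exp[OF holomorphic_even_series_besselJ_coeff_deriv] holomorphic_besselJ_log
  unfolding besselJ_log_deriv_order_def[abs_def] by (intro holomorphic_intros)

lemma has_field_derivative_besselJ_log_order:
  "((\<lambda>\<mu>. besselJ_log \<mu> w) has_field_derivative besselJ_log_deriv_order \<mu> w) (at \<mu>)"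
proof -
  have "((\<lambda>\<mu>. exp (\<mu> * (w - Ln 2))) has_field_derivative exp (\<mu> * (w - Ln 2)) * (w - Ln 2)) (at \<mu>)"
    by (auto intro!: derivative_eq_intros)
  from DERIV_mult[OF this has_field_derivative_even_series_besselJ_coeff]
  show ?thesis
    unfolding besselJ_log_def[abs_def] besselJ_log_deriv_order_def
    by (rule DERIV_cong) (simp add: besselJ_log_def algebra_simps)
qed

section \<open>Integer orders\<close>

lemma sin_mult_pi_eq_0_iff:
  fixes \<mu> :: complex
  shows "sin (\<mu> * pi) = 0 \<longleftrightarrow> \<mu> \<in> \<int>"
proof
  assume "sin (\<mu> * pi) = 0"
  then obtain k :: int where "\<mu> * pi = of_real (of_int k * pi)" by (auto simp: sin_eq_0)
  then have "\<mu> = of_int k" by simp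
  then show "\<mu> \<in> \<int>" by simp
next
  assume "\<mu> \<in> \<int>"
  then obtain k where "\<mu> = of_int k" by (elim Ints_cases)
  then have "\<mu> * pi = of_real (of_int k * pi)" by simp
  then show "sin (\<mu> * pi) = 0" by (auto simp: sin_eq_0)
qed

lemma sin_eq_0_imp_cos_neq_0: "sin (z :: complex) = 0 \<Longrightarrow> cos z \<noteq> 0"
  using sin_cos_squared_add[of z] by auto

lemma sin_of_int_mult_eq_0: "sin (z :: complex) = 0 \<Longrightarrow> sin (of_int m * z) = 0"
proof -
  assume "sin z = 0"
  then obtain k :: int where "z = of_real (of_int k * pi)" by (auto simp: sin_eq_0)
  then have "of_int m * z = of_real (of_int (m * k) * pi)" by simp
  then show ?thesis unfolding sin_eq_0 by blast
qed

lemma cos_of_nat_mult_pi: "cos (of_nat n * pi) = ((-1) ^ n :: complex)"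
proof -
  have "of_nat n * of_real pi = (of_real (real n * pi) :: complex)" by simp
  then show ?thesis by (simp add: cos_of_real)
qed

lemma eventually_at_Ints_not_Ints:
  assumes "(\<nu> :: complex) \<in> \<int>"
  shows "eventually (\<lambda>\<mu>. \<mu> \<notin> \<int>) (at \<nu>)"
proof -
  obtain n where n: "\<nu> = of_int n" using assms by (elim Ints_cases)
  have "\<mu> \<notin> \<int>" if "\<mu> \<noteq> \<nu>" "dist \<mu> \<nu> < 1/2" for \<mu>
  proof
    assume "\<mu> \<in> \<int>"
    then obtain j where j: "\<mu> = of_int j" by (elim Ints_cases)
    have "dist \<mu> \<nu> = \<bar>real_of_int (j - n)\<bar>"
      unfolding dist_norm j n by (metis norm_of_int of_int_diff)
    with that(2) have "j = n" by linarith
    with that(1) j n show False by simp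
  qed
  then show ?thesis unfolding eventually_at by (intro exI[of _ "1/2"]) auto
qed

lemma besselJ_log_uminus_of_nat:
  "besselJ_log (- of_nat n) w = (-1) ^ n * besselJ_log (of_nat n) w"
proof -
  define a where "a = w - Ln 2"
  define E where "E = even_series (besselJ_coeff (of_nat n)) (exp w)"
  have p: "(exp w / 2) ^ (2 * n) = exp (of_nat (2 * n) * a)"
    unfolding a_def exp_of_nat_mult by (simp add: exp_diff)
  have "besselJ_log (- of_nat n) w = (-1) ^ n * E * (exp (- of_nat n * a) * exp (of_nat (2 * n) * a))"
    unfolding besselJ_log_def even_series_besselJ_coeff_minus_of_nat p E_def[symmetric] a_def[symmetric]
    by (simp only: mult_ac)
  also have "exp (- of_nat n * a) * exp (of_nat (2 * n) * a) = exp (of_nat n * a)"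
    by (simp flip: exp_add add: algebra_simps)
  finally show ?thesis unfolding besselJ_log_def E_def[symmetric] a_def[symmetric] by (simp only: mult_ac)
qed

lemma besselJ_log_uminus_Ints:
  fixes \<nu> :: complex
  assumes "\<nu> \<in> \<int>"
  shows "besselJ_log (- \<nu>) w = cos (\<nu> * pi) * besselJ_log \<nu> w"
proof -
  obtain k where k: "\<nu> = of_int k" using assms by (elim Ints_cases)
  show ?thesis
  proof (cases "k \<ge> 0")
    case True
    then have "\<nu> = of_nat (nat k)" using k by simp
    then show ?thesis using besselJ_log_uminus_of_nat cos_of_nat_mult_pi by simp
  next
    case False
    then have \<nu>: "\<nu> = - of_nat (nat (- k))" using k by simp
    show ?thesis
      unfolding \<nu> besselJ_log_uminus_of_nat minus_minus mult_minus_left cos_minus cos_of_nat_mult_pi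
      by simp
  qed
qed

lemma besselY_quot_tendsto_Ints:
  fixes \<nu> :: complex
  assumes "\<nu> \<in> \<int>"
  shows "((\<lambda>\<mu>. besselY_quot \<mu> w) \<longlongrightarrow>
           (besselJ_log_deriv_order \<nu> w * cos (\<nu> * pi) + besselJ_log_deriv_order (- \<nu>) w) / (cos (\<nu> * pi) * pi))
         (at \<nu>)"
proof -
  have sin: "sin (\<nu> * pi) = 0" using assms sin_mult_pi_eq_0_iff by blast
  have minus: "((\<lambda>\<mu>. besselJ_log (- \<mu>) w) has_field_derivative besselJ_log_deriv_order (- \<nu>) w * (- 1)) (at \<nu>)"
    by (rule DERIV_chain2[OF has_field_derivative_besselJ_log_order]) (auto intro!: derivative_eq_intros)
  have cos: "((\<lambda>\<mu>. cos (\<mu> * pi)) has_field_derivative - sin (\<nu> * pi) * pi) (at \<nu>)"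
    by (auto intro!: derivative_eq_intros)
  have num: "((\<lambda>\<mu>. besselJ_log \<mu> w * cos (\<mu> * pi) - besselJ_log (- \<mu>) w) has_field_derivative
               besselJ_log_deriv_order \<nu> w * cos (\<nu> * pi) + besselJ_log_deriv_order (- \<nu>) w) (at \<nu>)"
    by (rule DERIV_cong[OF DERIV_diff[OF DERIV_mult[OF has_field_derivative_besselJ_log_order cos] minus]])
      (simp add: sin)
  have den: "((\<lambda>\<mu>. sin (\<mu> * pi)) has_field_derivative cos (\<nu> * pi) * pi) (at \<nu>)"
    by (auto intro!: derivative_eq_intros)
  \<comment> \<open>the numerator vanishes at integer orders since \<open>J_{-n} = (-1)^n J_n\<close>\<close>
  show ?thesis
    unfolding besselY_quot_def
    by (rule lhopital_complex_simple[OF num den])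
      (use sin sin_eq_0_imp_cos_neq_0 in \<open>auto simp: besselJ_log_uminus_Ints[OF assms]\<close>)
qed

lemma besselY_log_Ints:
  fixes \<nu> :: complex
  assumes "\<nu> \<in> \<int>"
  shows "besselY_log \<nu> w =
           (besselJ_log_deriv_order \<nu> w * cos (\<nu> * pi) + besselJ_log_deriv_order (- \<nu>) w) / (cos (\<nu> * pi) * pi)"
  using tendsto_Lim[OF trivial_limit_at besselY_quot_tendsto_Ints[OF assms]] assms
  by (simp add: besselY_log_def)

lemma tendsto_besselY_quot_Ints:
  fixes \<nu> :: complex
  assumes "\<nu> \<in> \<int>"
  shows "((\<lambda>\<mu>. besselY_quot \<mu> w) \<longlongrightarrow> besselY_log \<nu> w) (at \<nu>)"
  using besselY_quot_tendsto_Ints[OF assms] unfolding besselY_log_Ints[OF assms] .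

lemma holomorphic_besselY_log: "besselY_log \<nu> holomorphic_on UNIV"
proof (cases "\<nu> \<in> \<int>")
  case True
  then have "cos (\<nu> * pi) * pi \<noteq> 0"
    using sin_mult_pi_eq_0_iff sin_eq_0_imp_cos_neq_0 by simp
  with True show ?thesis
    unfolding besselY_log_Ints[OF True, abs_def]
    by (intro holomorphic_intros holomorphic_besselJ_log_deriv_order)
next
  case False
  then have "sin (\<nu> * pi) \<noteq> 0" using sin_mult_pi_eq_0_iff by blast
  with False show ?thesis
    unfolding besselY_log_def besselY_quot_def
    by (simp, intro holomorphic_intros holomorphic_besselJ_log)
qed

section \<open>Continuation across the branch cut\<close>

lemma chebU_cos_mult_sin: "chebU_cos m \<theta> * sin \<theta> = sin (of_int m * \<theta>)"
proof (cases "sin \<theta> = 0")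
  case True
  then show ?thesis using sin_of_int_mult_eq_0 by simp
qed (simp add: chebU_cos_def)

lemma chebU_cos_tendsto:
  assumes "sin \<theta> = 0"
  shows "((\<lambda>t. sin (of_int m * t) / sin t) \<longlongrightarrow> chebU_cos m \<theta>) (at \<theta>)"
proof -
  have "((\<lambda>t. sin (of_int m * t)) has_field_derivative cos (of_int m * \<theta>) * of_int m) (at \<theta>)"
    by (auto intro!: derivative_eq_intros)
  then have "((\<lambda>t. sin (of_int m * t) / sin t) \<longlongrightarrow> cos (of_int m * \<theta>) * of_int m / cos \<theta>) (at \<theta>)"
    using assms sin_of_int_mult_eq_0 sin_eq_0_imp_cos_neq_0
    by (intro lhopital_complex_simple[OF _ DERIV_sin]) auto
  moreover from this have "chebU_cos m \<theta> = cos (of_int m * \<theta>) * of_int m / cos \<theta>"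
    using assms by (simp add: chebU_cos_def tendsto_Lim[OF trivial_limit_at])
  ultimately show ?thesis by simp
qed

lemma tendsto_chebU_cos_mult_pi:
  fixes \<nu> :: complex
  assumes "\<nu> \<in> \<int>"
  shows "((\<lambda>\<mu>. chebU_cos m (\<mu> * pi)) \<longlongrightarrow> chebU_cos m (\<nu> * pi)) (at \<nu>)"
proof -
  have "filterlim (\<lambda>\<mu>. \<mu> * pi) (at (\<nu> * pi)) (at \<nu>)"
  proof (rule filterlim_atI)
    show "((\<lambda>\<mu>. \<mu> * pi) \<longlongrightarrow> \<nu> * pi) (at \<nu>)"
      by (intro tendsto_mult_right tendsto_ident_at)
    show "eventually (\<lambda>\<mu>. \<mu> * pi \<noteq> \<nu> * pi) (at \<nu>)"
      unfolding eventually_at by (intro exI[of _ 1]) auto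
  qed
  moreover have "sin (\<nu> * pi) = 0" using assms sin_mult_pi_eq_0_iff by blast
  ultimately have "((\<lambda>\<mu>. sin (of_int m * (\<mu> * pi)) / sin (\<mu> * pi)) \<longlongrightarrow> chebU_cos m (\<nu> * pi)) (at \<nu>)"
    using filterlim_compose[OF chebU_cos_tendsto] by blast
  moreover have "eventually (\<lambda>\<mu>. sin (of_int m * (\<mu> * pi)) / sin (\<mu> * pi) = chebU_cos m (\<mu> * pi)) (at \<nu>)"
    using eventually_at_Ints_not_Ints[OF assms]
    by eventually_elim (simp add: chebU_cos_def sin_mult_pi_eq_0_iff)
  ultimately show ?thesis by (rule Lim_transform_eventually)
qed

lemma besselY_quot_shift:
  fixes \<mu> :: complex
  assumes "sin (\<mu> * pi) \<noteq> 0"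
  shows "besselY_quot \<mu> (w - of_int m * pi * \<i>) = exp (of_int m * \<mu> * pi * \<i>) * besselY_quot \<mu> w
           - 2 * \<i> * chebU_cos m (\<mu> * pi) * cos (\<mu> * pi) * besselJ_log \<mu> w"
proof -
  define P Q where "P = exp (of_int m * \<mu> * pi * \<i>)" and "Q = exp (- of_int m * \<mu> * pi * \<i>)"
  have P: "exp (- of_int m * - \<mu> * pi * \<i>) = P" unfolding P_def by simp
  have U: "chebU_cos m (\<mu> * pi) = (P - Q) / (2 * \<i>) / sin (\<mu> * pi)"
    using assms unfolding chebU_cos_def P_def Q_def sin_exp_eq by (simp add: mult_ac)
  show ?thesis
    unfolding besselY_quot_def besselJ_log_shift P Q_def[symmetric] P_def[symmetric] U
    using assms by (simp add: field_simps)
qed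

lemma besselY_log_shift:
  fixes \<nu> :: complex
  shows "besselY_log \<nu> (w - of_int m * pi * \<i>) = exp (of_int m * \<nu> * pi * \<i>) * besselY_log \<nu> w
     - 2 * \<i> * chebU_cos m (\<nu> * pi) * cos (\<nu> * pi) * besselJ_log \<nu> w"
proof (cases "\<nu> \<in> \<int>")
  case False
  then have "sin (\<nu> * pi) \<noteq> 0" using sin_mult_pi_eq_0_iff by blast
  with False show ?thesis
    using besselY_quot_shift[of \<nu>] unfolding besselY_log_def by simp
next
  case True
  \<comment> \<open>pass to the limit in the identity for non-integer orders\<close>
  define rhs where "rhs \<mu> = exp (of_int m * \<mu> * pi * \<i>) * besselY_quot \<mu> w
                    - 2 * \<i> * chebU_cos m (\<mu> * pi) * cos (\<mu> * pi) * besselJ_log \<mu> w" for \<mu> :: complex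
  have "((\<lambda>\<mu>. besselJ_log \<mu> w) \<longlongrightarrow> besselJ_log \<nu> w) (at \<nu>)"
    by (rule isContD[OF DERIV_isCont[OF has_field_derivative_besselJ_log_order]])
  then have "(rhs \<longlongrightarrow> exp (of_int m * \<nu> * pi * \<i>) * besselY_log \<nu> w
                    - 2 * \<i> * chebU_cos m (\<nu> * pi) * cos (\<nu> * pi) * besselJ_log \<nu> w) (at \<nu>)"
    unfolding rhs_def
    by (intro tendsto_intros tendsto_besselY_quot_Ints[OF True] tendsto_chebU_cos_mult_pi[OF True])
  moreover have "eventually (\<lambda>\<mu>. rhs \<mu> = besselY_quot \<mu> (w - of_int m * pi * \<i>)) (at \<nu>)"
    using eventually_at_Ints_not_Ints[OF True]
  proof eventually_elim
    case (elim \<mu>)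
    then have "sin (\<mu> * pi) \<noteq> 0" using sin_mult_pi_eq_0_iff by blast
    then show ?case unfolding rhs_def by (rule besselY_quot_shift[symmetric])
  qed
  ultimately have "((\<lambda>\<mu>. besselY_quot \<mu> (w - of_int m * pi * \<i>)) \<longlongrightarrow>
      exp (of_int m * \<nu> * pi * \<i>) * besselY_log \<nu> w
      - 2 * \<i> * chebU_cos m (\<nu> * pi) * cos (\<nu> * pi) * besselJ_log \<nu> w) (at \<nu>)"
    by (rule Lim_transform_eventually)
  from tendsto_unique[OF trivial_limit_at tendsto_besselY_quot_Ints[OF True] this] show ?thesis .
qed

lemma lommelS_log_shift:
  fixes \<nu> :: complex
  shows "lommelS_log \<nu> (w - of_int m * pi * \<i>) =
     exp (- of_int m * \<nu> * pi * \<i>) * lommelS_log \<nu> w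
     + (pi * 2 powr (\<nu> - 2) * \<i> * exp (- of_int m * \<nu> * pi * \<i>) * Gamma \<nu>
        * (chebU_cos m (\<nu> * pi) * exp ((of_int m + 1) * \<nu> * pi * \<i>) - of_int m))
       * (besselJ_log \<nu> w + \<i> * besselY_log \<nu> w)
     + (pi * 2 powr (\<nu> - 2) * \<i> * exp (- of_int m * \<nu> * pi * \<i>) * Gamma \<nu>
        * (chebU_cos m (\<nu> * pi) * exp ((of_int m - 1) * \<nu> * pi * \<i>) - of_int m))
       * (besselJ_log \<nu> w - \<i> * besselY_log \<nu> w)"
proof -
  define P Q E X where "P = exp (of_int m * \<nu> * pi * \<i>)" and "Q = exp (- of_int m * \<nu> * pi * \<i>)"
    and "E = exp (\<nu> * pi * \<i>)" and "X = exp (- (\<nu> * pi * \<i>))"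
  have "P * Q = 1" "E * X = 1" unfolding P_def Q_def E_def X_def by (simp_all flip: exp_add)
  moreover have "cos (\<nu> * pi) = (E + X) / 2"
    unfolding E_def X_def cos_exp_eq by (simp add: mult_ac)
  moreover have "chebU_cos m (\<nu> * pi) * (E - X) = P - Q"
  proof -
    have "sin (\<nu> * pi) = (E - X) / (2 * \<i>)" "sin (of_int m * (\<nu> * pi)) = (P - Q) / (2 * \<i>)"
      unfolding E_def X_def P_def Q_def sin_exp_eq by (simp_all add: mult_ac)
    with chebU_cos_mult_sin[of m "\<nu> * pi"] show ?thesis by (simp add: field_simps)
  qed
  moreover have "(2 :: complex) powr (\<nu> - 1) = 2 * 2 powr (\<nu> - 2)"
    using powr_add[of "2 :: complex" "\<nu> - 2" 1] by simp
  moreover have "(of_real (of_int m * pi) :: complex) = of_int m * of_real pi" "\<i> * \<i> = (-1 :: complex)"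
    by simp_all
  moreover have shifts: "exp ((of_int m + 1) * \<nu> * pi * \<i>) = P * E" "exp ((of_int m - 1) * \<nu> * pi * \<i>) = P * X"
    "exp (\<nu> * (w - of_int m * pi * \<i>)) = Q * exp (\<nu> * w)"
    unfolding P_def Q_def E_def X_def by (simp_all flip: exp_add add: algebra_simps)
  ultimately show ?thesis
    unfolding lommelS_log_def besselJ_log_shift besselY_log_shift even_series_exp_shift shifts
      P_def[symmetric] Q_def[symmetric]
    by algebra
qed

lemma holomorphic_lommelS_log:
  assumes "\<And>n::nat. \<nu> \<noteq> - of_nat n"
  shows "lommelS_log \<nu> holomorphic_on UNIV"
  using holomorphic_on_compose_exp[OF holomorphic_even_series_lommelS_coeff[OF assms]]
    holomorphic_besselJ_log holomorphic_besselY_log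
  unfolding lommelS_log_def[abs_def] by (intro holomorphic_intros) simp_all

theorem lemma3p5:
  fixes \<nu> \<zeta> :: complex and m :: int
  assumes "\<And>n::nat. \<nu> \<noteq> - of_nat n"
    and "\<zeta> \<noteq> 0" and "- pi < Arg \<zeta>" and "Arg \<zeta> < pi"
  shows "\<exists>F. F holomorphic_on UNIV
           \<and> (\<forall>w. - pi < Im w \<and> Im w < pi \<longrightarrow> F w = lommelS \<nu> (exp w))
           \<and> F (Ln \<zeta> - of_int m * pi * \<i>) =
               exp (- of_int m * \<nu> * pi * \<i>) * lommelS \<nu> \<zeta>
               + (pi * 2 powr (\<nu> - 2) * \<i> * exp (- of_int m * \<nu> * pi * \<i>) * Gamma \<nu>
                  * (chebU_cos m (\<nu> * pi) * exp ((of_int m + 1) * \<nu> * pi * \<i>) - of_int m))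
                 * hankel1 \<nu> \<zeta>
               + (pi * 2 powr (\<nu> - 2) * \<i> * exp (- of_int m * \<nu> * pi * \<i>) * Gamma \<nu>
                  * (chebU_cos m (\<nu> * pi) * exp ((of_int m - 1) * \<nu> * pi * \<i>) - of_int m))
                 * hankel2 \<nu> \<zeta>"
proof -
  have "- pi < Im (Ln \<zeta>)" "Im (Ln \<zeta>) < pi" using assms(2-4) by (simp_all add: Arg_eq_Im_Ln)
  then have "besselJ \<nu> \<zeta> = besselJ_log \<nu> (Ln \<zeta>)" "besselY \<nu> \<zeta> = besselY_log \<nu> (Ln \<zeta>)"
    "lommelS \<nu> \<zeta> = lommelS_log \<nu> (Ln \<zeta>)"
    using besselJ_exp_eq besselY_exp_eq lommelS_exp_eq assms(2) by (metis exp_Ln)+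
  then show ?thesis
    using holomorphic_lommelS_log[OF assms(1)] lommelS_exp_eq lommelS_log_shift[of \<nu> "Ln \<zeta>" m]
    unfolding hankel1_def hankel2_def by (intro exI[of _ "lommelS_log \<nu>"]) auto
qed

end
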